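(* Let $\{|\mu_0\rangle,|\mu_1\rangle\}$ and $\{|\nu_0\rangle,|\nu_1\rangle\}$ be orthonormal bases of $\mathbb{C}^2$, $N$ the projective measurement $\{|\nu_0\rangle\langle\nu_0|,|\nu_1\rangle\langle\nu_1|\}$, and $c=\max_{x,y}|\langle\mu_x|\nu_y\rangle|^2$. Let $a\in\{0,1\}$, $w\in[0,1]$, $\delta>0$, and let $J\subseteq\{i\in\{0,1\}^n: w_a(i)\le w+\delta\}$. Let $\mathcal{H}_C$ be any finite-dimensional Hilbert space and let $$|\phi'\rangle=\sum_{i\in J}\alpha_i\,|\mu_{i_1}\rangle\otimes\cdots\otimes|\mu_{i_n}\rangle\otimes|C_i\rangle\in(\mathbb{C}^2)^{\otimes n}\otimes\mathcal{H}_C$$ be a unit vector, where $|C_i\rangle\in\mathcal{H}_C$ are arbitrary unit vectors (not necessarily orthogonal). Then the reduced state $\sigma=\mathrm{tr}_C|\phi'\rangle\langle\phi'|$ on the $n$ qubits satisfies $$H_\infty(N)_\sigma\ \ge\ -n\log_2 c-n\,\bar H(w+\delta).$$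
   Context: $w_a(i)=|\{l: i_l\ne a\}|/n$ is the relative $a$-Hamming weight. $\bar H(x)=-x\log_2x-(1-x)\log_2(1-x)$ for $x\in[0,1/2]$, $\bar H(x)=0$ for $x<0$, $\bar H(x)=1$ for $x>1/2$. For a state $\sigma$ on $(\mathbb{C}^2)^{\otimes n}$, $H_\infty(N)_\sigma=-\log_2\max_{j\in\{0,1\}^n}\langle\nu_{j_1}\cdots\nu_{j_n}|\sigma|\nu_{j_1}\cdots\nu_{j_n}\rangle$. *)

theory Defs
  imports Complex_Main
begin

text \<open>Qubit vectors: elements of C^2 represented as functions bool => complex
  (index False ~ 0, True ~ 1). Computational strings i in {0,1}^n are bool lists
  of length n.\<close>

type_synonym qubit = "bool \<Rightarrow> complex"

definition qinner :: "qubit \<Rightarrow> qubit \<Rightarrow> complex" where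
  "qinner u v = (\<Sum>b\<in>UNIV. cnj (u b) * v b)"

definition orthonormal_basis2 :: "(bool \<Rightarrow> qubit) \<Rightarrow> bool" where
  "orthonormal_basis2 e \<longleftrightarrow> (\<forall>x y. qinner (e x) (e y) = (if x = y then 1 else 0))"

definition strings :: "nat \<Rightarrow> bool list set" where
  "strings n = {xs. length xs = n}"

definition hamming_weight_rel :: "bool \<Rightarrow> bool list \<Rightarrow> real" where
  "hamming_weight_rel a i = real (card {l. l < length i \<and> i ! l \<noteq> a}) / real (length i)"

definition Hbar :: "real \<Rightarrow> real" where
  "Hbar x = (if x < 0 then 0 else if x > 1/2 then 1
             else - x * log 2 x - (1 - x) * log 2 (1 - x))"

text \<open>Product vector |v_{j_1}> (x) ... (x) |v_{j_n}> in (C^2)^{(x) n}, with components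
  indexed by strings x of length n.\<close>
definition prodvec :: "(bool \<Rightarrow> qubit) \<Rightarrow> bool list \<Rightarrow> bool list \<Rightarrow> complex" where
  "prodvec e j x = (\<Prod>l<length j. e (j ! l) (x ! l))"

text \<open>The state |phi'> = sum_{i in J} alpha_i |mu_i> (x) |C_i> in (C^2)^{(x) n} (x) H_C,
  with H_C = C^'c for a finite type 'c, components indexed by (x, k).\<close>
definition phi_state :: "(bool \<Rightarrow> qubit) \<Rightarrow> bool list set \<Rightarrow> (bool list \<Rightarrow> complex)
     \<Rightarrow> (bool list \<Rightarrow> 'c::finite \<Rightarrow> complex) \<Rightarrow> bool list \<Rightarrow> 'c \<Rightarrow> complex" where
  "phi_state mu J alpha C x k = (\<Sum>i\<in>J. alpha i * prodvec mu i x * C i k)"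

definition ptrace_C :: "(bool list \<Rightarrow> 'c::finite \<Rightarrow> complex) \<Rightarrow> bool list \<Rightarrow> bool list \<Rightarrow> complex" where
  "ptrace_C phi x y = (\<Sum>k\<in>UNIV. phi x k * cnj (phi y k))"

definition expval :: "nat \<Rightarrow> (bool list \<Rightarrow> bool list \<Rightarrow> complex) \<Rightarrow> (bool list \<Rightarrow> complex) \<Rightarrow> complex" where
  "expval n sigma v = (\<Sum>x\<in>strings n. \<Sum>y\<in>strings n. cnj (v x) * sigma x y * v y)"

definition Hmin_meas :: "nat \<Rightarrow> (bool \<Rightarrow> qubit) \<Rightarrow> (bool list \<Rightarrow> bool list \<Rightarrow> complex) \<Rightarrow> real" where
  "Hmin_meas n nu sigma = - log 2 (Max ((\<lambda>j. Re (expval n sigma (prodvec nu j))) ` strings n))"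

definition overlap_c :: "(bool \<Rightarrow> qubit) \<Rightarrow> (bool \<Rightarrow> qubit) \<Rightarrow> real" where
  "overlap_c mu nu = Max {(cmod (qinner (mu x) (nu y)))\<^sup>2 | x y. True}"

end

theory Submission
  imports Defs "HOL-Analysis.Convex"
begin

text \<open>
  In the product basis the probability of outcome \<open>j\<close> is
  \<open>\<Sum>\<^sub>k |\<Sum>\<^sub>i\<^sub>\<in>\<^sub>J \<alpha>\<^sub>i \<langle>\<nu>\<^sub>j|\<mu>\<^sub>i\<rangle> C\<^sub>i(k)|\<^sup>2\<close>. Cauchy-Schwarz in \<open>i\<close>, together with
  \<open>\<Sum>\<^sub>i |\<alpha>\<^sub>i|\<^sup>2 = 1\<close> (the \<open>|\<mu>\<^sub>i\<rangle>\<close> are orthonormal) and \<open>\<parallel>C\<^sub>i\<parallel> = 1\<close>, bounds it by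
  \<open>\<Sum>\<^sub>i\<^sub>\<in>\<^sub>J |\<langle>\<nu>\<^sub>j|\<mu>\<^sub>i\<rangle>|\<^sup>2 \<le> |J| c\<^sup>n\<close>. The count \<open>|J|\<close> is bounded by the volume of a Hamming
  ball: under the product distribution in which each position differs from \<open>a\<close> with
  probability \<open>p = w + \<delta> \<le> 1/2\<close>, every string of relative weight at most \<open>p\<close> has
  probability at least \<open>2\<^bsup>-n H(p)\<^esup>\<close>.
\<close>

lemma finite_strings [simp]: "finite (strings n)"
proof -
  have "strings n = {xs. set xs \<subseteq> (UNIV::bool set) \<and> length xs = n}"
    by (auto simp: strings_def)
  thus ?thesis using finite_lists_length_eq[of "UNIV::bool set" n] by simp
qed

lemma card_strings: "card (strings n) = 2 ^ n"
proof -
  have "strings n = {xs. set xs \<subseteq> (UNIV::bool set) \<and> length xs = n}"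
    by (auto simp: strings_def)
  thus ?thesis using card_lists_length_eq[of "UNIV::bool set" n] by simp
qed

lemma strings_Suc: "strings (Suc n) = (\<lambda>(xs, b). xs @ [b]) ` (strings n \<times> UNIV)"
proof
  show "strings (Suc n) \<subseteq> (\<lambda>(xs, b). xs @ [b]) ` (strings n \<times> UNIV)"
  proof
    fix x assume "x \<in> strings (Suc n)"
    hence len: "length x = Suc n" by (simp add: strings_def)
    then obtain ys b where "x = ys @ [b]" by (metis length_Suc_conv_rev)
    thus "x \<in> (\<lambda>(xs, b). xs @ [b]) ` (strings n \<times> UNIV)"
      using len by (auto simp: strings_def image_iff)
  qed
qed (auto simp: strings_def)

lemma sum_strings_prod:
  fixes F :: "nat \<Rightarrow> bool \<Rightarrow> 'a::comm_semiring_1"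
  shows "(\<Sum>x\<in>strings n. \<Prod>l<n. F l (x ! l)) = (\<Prod>l<n. \<Sum>b\<in>UNIV. F l b)"
proof (induction n)
  case 0
  have "strings 0 = {[]}" by (auto simp: strings_def)
  thus ?case by simp
next
  case (Suc n)
  have snoc: "inj_on (\<lambda>(xs, b). xs @ [b]) (strings n \<times> UNIV)"
    by (auto simp: inj_on_def)
  have "(\<Sum>x\<in>strings (Suc n). \<Prod>l<Suc n. F l (x ! l))
      = (\<Sum>(x, b)\<in>strings n \<times> UNIV. \<Prod>l<Suc n. F l ((x @ [b]) ! l))"
    unfolding strings_Suc by (subst sum.reindex[OF snoc]) (simp add: case_prod_beta)
  also have "\<dots> = (\<Sum>(x, b)\<in>strings n \<times> UNIV. (\<Prod>l<n. F l (x ! l)) * F n b)"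
    by (intro sum.cong refl) (auto simp: strings_def nth_append intro!: prod.cong)
  also have "\<dots> = (\<Sum>x\<in>strings n. \<Prod>l<n. F l (x ! l)) * (\<Sum>b\<in>UNIV. F n b)"
    by (simp add: sum.cartesian_product[symmetric] sum_product)
  finally show ?case using Suc by simp
qed

lemma prod_nth_eq_delta:
  assumes "length i = n" "length j = n"
  shows "(\<Prod>l<n. if i ! l = j ! l then 1 else 0::'a::comm_semiring_1) = (if i = j then 1 else 0)"
proof (cases "i = j")
  case False
  then obtain l where "l < n" "i ! l \<noteq> j ! l" using assms by (metis nth_equalityI)
  thus ?thesis using False by (intro trans[OF prod_zero]) auto
qed simp

lemma qinner_commute: "qinner v u = cnj (qinner u v)"
  by (simp add: qinner_def mult.commute)

text \<open>A \<open>2\<times>2\<close> matrix with orthonormal rows has determinant of modulus one, hence is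
  invertible, hence unitary: its columns are orthonormal as well.\<close>
lemma orthonormal_basis2_complete:
  assumes "orthonormal_basis2 e"
  shows "(\<Sum>b\<in>UNIV. e b p * cnj (e b q)) = (if p = q then 1 else 0)"
proof -
  define a where "a = e False False"
  define b where "b = e False True"
  define c where "c = e True False"
  define d where "d = e True True"
  have UNIV_bool: "(UNIV::bool set) = {False, True}" by auto
  have ortho: "(\<Sum>b\<in>UNIV. cnj (e x b) * e y b) = (if x = y then 1 else 0)" for x y
    using assms by (simp add: orthonormal_basis2_def qinner_def)
  have h1: "cnj a * a + cnj b * b = 1" and h2: "cnj c * c + cnj d * d = 1"
    and h3: "cnj a * c + cnj b * d = 0"
    using ortho[of False False] ortho[of True True] ortho[of False True]
    by (simp_all add: UNIV_bool a_def b_def c_def d_def)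
  have h4: "a * cnj c + b * cnj d = 0" using arg_cong[OF h3, of cnj] by simp
  have "(cnj a * cnj d - cnj c * cnj b) * (a * d - b * c) = 1"
    using h1 h2 h3 h4 by algebra
  hence det: "a * d - b * c \<noteq> 0" by auto
  have "(a * cnj a + c * cnj c - 1) * (a * d - b * c) = 0"
    "(a * cnj b + c * cnj d) * (a * d - b * c) = 0"
    "(b * cnj b + d * cnj d - 1) * (a * d - b * c) = 0"
    using h1 h2 h3 h4 by algebra+
  hence r1: "a * cnj a + c * cnj c = 1" and r2: "a * cnj b + c * cnj d = 0"
    and r3: "b * cnj b + d * cnj d = 1"
    using det by auto
  have r4: "b * cnj a + d * cnj c = 0" using arg_cong[OF r2, of cnj] by (simp add: mult.commute)
  show ?thesis
    using r1 r2 r3 r4 by (cases p; cases q) (simp_all add: UNIV_bool a_def b_def c_def d_def)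
qed

lemma inner_prodvec:
  assumes "length i = n" "length j = n"
  shows "(\<Sum>x\<in>strings n. cnj (prodvec e i x) * prodvec f j x)
       = (\<Prod>l<n. qinner (e (i ! l)) (f (j ! l)))"
proof -
  have "(\<Sum>x\<in>strings n. cnj (prodvec e i x) * prodvec f j x)
      = (\<Sum>x\<in>strings n. \<Prod>l<n. cnj (e (i ! l) (x ! l)) * f (j ! l) (x ! l))"
    by (simp add: prodvec_def assms prod.distrib)
  also have "\<dots> = (\<Prod>l<n. \<Sum>b\<in>UNIV. cnj (e (i ! l) b) * f (j ! l) b)"
    by (rule sum_strings_prod)
  finally show ?thesis by (simp add: qinner_def)
qed

lemma prodvec_orthonormal:
  assumes "orthonormal_basis2 e" "i \<in> strings n" "j \<in> strings n"
  shows "(\<Sum>x\<in>strings n. cnj (prodvec e i x) * prodvec e j x) = (if i = j then 1 else 0)"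
proof -
  have len: "length i = n" "length j = n" using assms by (auto simp: strings_def)
  have "(\<Sum>x\<in>strings n. cnj (prodvec e i x) * prodvec e j x)
      = (\<Prod>l<n. if i ! l = j ! l then 1 else 0)"
    using assms(1) by (simp add: inner_prodvec[OF len] orthonormal_basis2_def)
  thus ?thesis using prod_nth_eq_delta[OF len] by simp
qed

lemma prodvec_complete:
  assumes "orthonormal_basis2 e" "x \<in> strings n" "y \<in> strings n"
  shows "(\<Sum>j\<in>strings n. prodvec e j x * cnj (prodvec e j y)) = (if x = y then 1 else 0)"
proof -
  have len: "length x = n" "length y = n" using assms by (auto simp: strings_def)
  have "(\<Sum>j\<in>strings n. prodvec e j x * cnj (prodvec e j y))
      = (\<Sum>j\<in>strings n. \<Prod>l<n. e (j ! l) (x ! l) * cnj (e (j ! l) (y ! l)))"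
    by (intro sum.cong refl) (simp add: prodvec_def strings_def prod.distrib)
  also have "\<dots> = (\<Prod>l<n. \<Sum>b\<in>UNIV. e b (x ! l) * cnj (e b (y ! l)))"
    by (rule sum_strings_prod)
  also have "\<dots> = (\<Prod>l<n. if x ! l = y ! l then 1 else 0)"
    using orthonormal_basis2_complete[OF assms(1)] by simp
  finally show ?thesis using prod_nth_eq_delta[OF len] by simp
qed

lemma prodvec_parseval:
  assumes "orthonormal_basis2 e"
  shows "(\<Sum>j\<in>strings n. (cmod (\<Sum>x\<in>strings n. cnj (prodvec e j x) * v x))\<^sup>2)
       = (\<Sum>x\<in>strings n. (cmod (v x))\<^sup>2)"
proof -
  have "complex_of_real (\<Sum>j\<in>strings n. (cmod (\<Sum>x\<in>strings n. cnj (prodvec e j x) * v x))\<^sup>2)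
      = (\<Sum>j\<in>strings n. \<Sum>x\<in>strings n. \<Sum>y\<in>strings n.
           v x * cnj (v y) * (prodvec e j y * cnj (prodvec e j x)))"
    unfolding of_real_sum complex_norm_square cnj_sum sum_product
    by (intro sum.cong refl) (simp add: mult_ac)
  also have "\<dots> = (\<Sum>x\<in>strings n. \<Sum>y\<in>strings n.
           v x * cnj (v y) * (\<Sum>j\<in>strings n. prodvec e j y * cnj (prodvec e j x)))"
    by (subst sum.swap, rule sum.cong[OF refl], subst sum.swap) (simp add: sum_distrib_left)
  also have "\<dots> = (\<Sum>x\<in>strings n. \<Sum>y\<in>strings n. v x * cnj (v y) * (if y = x then 1 else 0))"
    by (intro sum.cong refl) (simp add: prodvec_complete[OF assms])
  also have "\<dots> = complex_of_real (\<Sum>x\<in>strings n. (cmod (v x))\<^sup>2)"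
    unfolding of_real_sum complex_norm_square
    by (simp add: if_distrib[where f="\<lambda>t. _ * t"] sum.delta cong: if_cong)
  finally show ?thesis by (simp only: of_real_eq_iff)
qed

lemma expval_ptrace_C:
  fixes phi :: "bool list \<Rightarrow> 'c::finite \<Rightarrow> complex"
  shows "expval n (ptrace_C phi) v
       = complex_of_real (\<Sum>k\<in>UNIV. (cmod (\<Sum>x\<in>strings n. cnj (v x) * phi x k))\<^sup>2)"
proof -
  have "complex_of_real (\<Sum>k\<in>UNIV. (cmod (\<Sum>x\<in>strings n. cnj (v x) * phi x k))\<^sup>2)
      = (\<Sum>k\<in>UNIV. \<Sum>x\<in>strings n. \<Sum>y\<in>strings n. cnj (v x) * (phi x k * cnj (phi y k)) * v y)"
    unfolding of_real_sum complex_norm_square cnj_sum sum_product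
    by (intro sum.cong refl) (simp add: mult_ac)
  also have "\<dots> = expval n (ptrace_C phi) v"
    unfolding expval_def ptrace_C_def sum_distrib_left sum_distrib_right
    by (subst sum.swap, rule sum.cong[OF refl], rule sum.swap)
  finally show ?thesis by simp
qed

lemma norm_sum_prodvec:
  assumes "orthonormal_basis2 e" "J \<subseteq> strings n"
  shows "(\<Sum>x\<in>strings n. (cmod (\<Sum>i\<in>J. \<beta> i * prodvec e i x))\<^sup>2) = (\<Sum>i\<in>J. (cmod (\<beta> i))\<^sup>2)"
proof -
  have fin: "finite J" using assms(2) by (rule finite_subset) simp
  have "complex_of_real (\<Sum>x\<in>strings n. (cmod (\<Sum>i\<in>J. \<beta> i * prodvec e i x))\<^sup>2)
      = (\<Sum>x\<in>strings n. \<Sum>i\<in>J. \<Sum>i'\<in>J. \<beta> i * cnj (\<beta> i') * (cnj (prodvec e i' x) * prodvec e i x))"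
    unfolding of_real_sum complex_norm_square cnj_sum sum_product
    by (intro sum.cong refl) (simp add: mult_ac)
  also have "\<dots> = (\<Sum>i\<in>J. \<Sum>i'\<in>J. \<beta> i * cnj (\<beta> i') * (\<Sum>x\<in>strings n. cnj (prodvec e i' x) * prodvec e i x))"
    unfolding sum_distrib_left by (subst sum.swap, rule sum.cong[OF refl], rule sum.swap)
  also have "\<dots> = (\<Sum>i\<in>J. \<Sum>i'\<in>J. \<beta> i * cnj (\<beta> i') * (if i' = i then 1 else 0))"
    using assms by (intro sum.cong refl) (subst prodvec_orthonormal, auto)
  also have "\<dots> = (\<Sum>i\<in>J. \<beta> i * cnj (\<beta> i))"
    using fin by (simp add: if_distrib[where f="\<lambda>t. _ * t"] cong: if_cong)
  also have "\<dots> = complex_of_real (\<Sum>i\<in>J. (cmod (\<beta> i))\<^sup>2)"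
    unfolding of_real_sum complex_norm_square by (rule refl)
  finally show ?thesis by (simp only: of_real_eq_iff)
qed

lemma norm_phi_state:
  fixes C :: "bool list \<Rightarrow> 'c::finite \<Rightarrow> complex"
  assumes "orthonormal_basis2 mu" "J \<subseteq> strings n"
    and "\<And>i. i \<in> J \<Longrightarrow> (\<Sum>k\<in>UNIV. (cmod (C i k))\<^sup>2) = 1"
  shows "(\<Sum>x\<in>strings n. \<Sum>k\<in>UNIV. (cmod (phi_state mu J alpha C x k))\<^sup>2)
       = (\<Sum>i\<in>J. (cmod (alpha i))\<^sup>2)"
proof -
  have "(\<Sum>x\<in>strings n. \<Sum>k\<in>UNIV. (cmod (phi_state mu J alpha C x k))\<^sup>2)
      = (\<Sum>k\<in>UNIV. \<Sum>x\<in>strings n. (cmod (\<Sum>i\<in>J. (alpha i * C i k) * prodvec mu i x))\<^sup>2)"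
    unfolding phi_state_def by (subst sum.swap) (simp add: mult_ac)
  also have "\<dots> = (\<Sum>k\<in>UNIV. \<Sum>i\<in>J. (cmod (alpha i))\<^sup>2 * (cmod (C i k))\<^sup>2)"
    using assms(1,2) by (simp add: norm_sum_prodvec norm_mult power_mult_distrib)
  also have "\<dots> = (\<Sum>i\<in>J. (cmod (alpha i))\<^sup>2 * (\<Sum>k\<in>UNIV. (cmod (C i k))\<^sup>2))"
    by (subst sum.swap) (simp add: sum_distrib_left)
  also have "\<dots> = (\<Sum>i\<in>J. (cmod (alpha i))\<^sup>2)"
    using assms(3) by simp
  finally show ?thesis .
qed

lemma overlap_c_ge: "(cmod (qinner (mu x) (nu y)))\<^sup>2 \<le> overlap_c mu nu"
proof -
  have "{(cmod (qinner (mu x) (nu y)))\<^sup>2 | x y. True}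
      = (\<lambda>(x, y). (cmod (qinner (mu x) (nu y)))\<^sup>2) ` UNIV"
    by auto
  hence "finite {(cmod (qinner (mu x) (nu y)))\<^sup>2 | x y. True}" by simp
  thus ?thesis unfolding overlap_c_def by (rule Max_ge) blast
qed

lemma overlap_c_nonneg: "0 \<le> overlap_c mu nu"
  using overlap_c_ge[of mu True nu True] by (meson order_trans zero_le_power2)

lemma norm_inner_prodvec_le:
  assumes "i \<in> strings n" "j \<in> strings n"
  shows "(cmod (\<Sum>x\<in>strings n. cnj (prodvec nu j x) * prodvec mu i x))\<^sup>2 \<le> overlap_c mu nu ^ n"
proof -
  have len: "length j = n" "length i = n" using assms by (auto simp: strings_def)
  have "(cmod (\<Sum>x\<in>strings n. cnj (prodvec nu j x) * prodvec mu i x))\<^sup>2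
      = (\<Prod>l<n. (cmod (qinner (mu (i ! l)) (nu (j ! l))))\<^sup>2)"
    unfolding inner_prodvec[OF len] prod_norm[symmetric] prod_power_distrib
    by (subst qinner_commute) simp
  also have "\<dots> \<le> (\<Prod>l<n. overlap_c mu nu)"
    by (intro prod_mono conjI zero_le_power2 overlap_c_ge)
  finally show ?thesis by simp
qed

lemma expval_ptrace_phi_state_le:
  fixes C :: "bool list \<Rightarrow> 'c::finite \<Rightarrow> complex"
  assumes mu: "orthonormal_basis2 mu" and J: "J \<subseteq> strings n" and j: "j \<in> strings n"
    and C: "\<And>i. i \<in> J \<Longrightarrow> (\<Sum>k\<in>UNIV. (cmod (C i k))\<^sup>2) = 1"
    and alpha: "(\<Sum>i\<in>J. (cmod (alpha i))\<^sup>2) = 1"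
  shows "Re (expval n (ptrace_C (phi_state mu J alpha C)) (prodvec nu j))
       \<le> real (card J) * overlap_c mu nu ^ n"
proof -
  define b where "b i = (\<Sum>x\<in>strings n. cnj (prodvec nu j x) * prodvec mu i x)" for i
  have amplitude: "(\<Sum>x\<in>strings n. cnj (prodvec nu j x) * phi_state mu J alpha C x k)
      = (\<Sum>i\<in>J. alpha i * b i * C i k)" for k
    unfolding phi_state_def b_def sum_distrib_left sum_distrib_right
    by (subst sum.swap) (simp add: mult_ac)
  have "Re (expval n (ptrace_C (phi_state mu J alpha C)) (prodvec nu j))
      = (\<Sum>k\<in>UNIV. (cmod (\<Sum>i\<in>J. alpha i * b i * C i k))\<^sup>2)"
    by (simp add: expval_ptrace_C amplitude)
  also have "\<dots> \<le> (\<Sum>k\<in>UNIV. \<Sum>i\<in>J. (cmod (b i))\<^sup>2 * (cmod (C i k))\<^sup>2)"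
  proof (rule sum_mono)
    fix k :: 'c
    have "cmod (\<Sum>i\<in>J. alpha i * b i * C i k) \<le> (\<Sum>i\<in>J. cmod (alpha i) * (cmod (b i) * cmod (C i k)))"
      by (rule order_trans[OF norm_sum]) (simp add: norm_mult mult.assoc)
    hence "(cmod (\<Sum>i\<in>J. alpha i * b i * C i k))\<^sup>2
         \<le> (\<Sum>i\<in>J. cmod (alpha i) * (cmod (b i) * cmod (C i k)))\<^sup>2"
      by (simp add: power_mono)
    also have "\<dots> \<le> (\<Sum>i\<in>J. (cmod (alpha i))\<^sup>2) * (\<Sum>i\<in>J. (cmod (b i) * cmod (C i k))\<^sup>2)"
      by (rule Cauchy_Schwarz_ineq_sum)
    finally show "(cmod (\<Sum>i\<in>J. alpha i * b i * C i k))\<^sup>2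
        \<le> (\<Sum>i\<in>J. (cmod (b i))\<^sup>2 * (cmod (C i k))\<^sup>2)"
      by (simp add: alpha power_mult_distrib)
  qed
  also have "\<dots> = (\<Sum>i\<in>J. (cmod (b i))\<^sup>2 * (\<Sum>k\<in>UNIV. (cmod (C i k))\<^sup>2))"
    by (subst sum.swap) (simp add: sum_distrib_left)
  also have "\<dots> \<le> (\<Sum>i\<in>J. overlap_c mu nu ^ n)"
    using C J j by (intro sum_mono) (auto simp: b_def norm_inner_prodvec_le)
  finally show ?thesis by simp
qed

lemma sum_expval_ptrace_prodvec:
  fixes phi :: "bool list \<Rightarrow> 'c::finite \<Rightarrow> complex"
  assumes "orthonormal_basis2 nu"
  shows "(\<Sum>j\<in>strings n. Re (expval n (ptrace_C phi) (prodvec nu j)))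
       = (\<Sum>x\<in>strings n. \<Sum>k\<in>UNIV. (cmod (phi x k))\<^sup>2)"
proof -
  have "(\<Sum>j\<in>strings n. Re (expval n (ptrace_C phi) (prodvec nu j)))
      = (\<Sum>k\<in>UNIV. \<Sum>j\<in>strings n. (cmod (\<Sum>x\<in>strings n. cnj (prodvec nu j x) * phi x k))\<^sup>2)"
    by (simp add: expval_ptrace_C sum.swap[of _ "strings n"])
  also have "\<dots> = (\<Sum>k\<in>UNIV. \<Sum>x\<in>strings n. (cmod (phi x k))\<^sup>2)"
    by (simp only: prodvec_parseval[OF assms])
  finally show ?thesis by (rule trans) (rule sum.swap)
qed

lemma neg_log_le_Hmin_meas:
  fixes sigma :: "bool list \<Rightarrow> bool list \<Rightarrow> complex"
  assumes le: "\<And>j. j \<in> strings n \<Longrightarrow> Re (expval n sigma (prodvec nu j)) \<le> B"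
    and sum: "(\<Sum>j\<in>strings n. Re (expval n sigma (prodvec nu j))) = 1"
  shows "0 < B" and "- log 2 B \<le> Hmin_meas n nu sigma"
proof -
  define P where "P = (\<lambda>j. Re (expval n sigma (prodvec nu j))) ` strings n"
  have "replicate n False \<in> strings n" by (simp add: strings_def)
  hence fin: "finite P" and ne: "P \<noteq> {}" unfolding P_def by auto
  have ge_Max: "Re (expval n sigma (prodvec nu j)) \<le> Max P" if "j \<in> strings n" for j
    using fin that by (auto simp: P_def)
  have "Max P \<le> B" using le fin ne by (auto simp: P_def)
  moreover have "0 < Max P"
  proof (rule ccontr)
    assume "\<not> 0 < Max P"
    hence "(\<Sum>j\<in>strings n. Re (expval n sigma (prodvec nu j))) \<le> 0"
      using ge_Max by (intro sum_nonpos) force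
    with sum show False by simp
  qed
  ultimately show "0 < B" "- log 2 B \<le> Hmin_meas n nu sigma"
    by (simp_all add: Hmin_meas_def P_def[symmetric])
qed

lemma prod_bernoulli_eq:
  fixes p :: real and i :: "bool list" and a :: bool and n :: nat
  defines "k \<equiv> card {l. l < n \<and> i ! l \<noteq> a}"
  shows "(\<Prod>l<n. if i ! l = a then 1 - p else p) = p ^ k * (1 - p) ^ (n - k)"
proof -
  define S where "S = {l. l < n \<and> i ! l \<noteq> a}"
  have S: "S \<subseteq> {..<n}" unfolding S_def by auto
  have "(\<Prod>l<n. if i ! l = a then 1 - p else p)
      = (\<Prod>l\<in>{..<n} - S. if i ! l = a then 1 - p else p) * (\<Prod>l\<in>S. if i ! l = a then 1 - p else p)"
    by (rule prod.subset_diff[OF S]) simp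
  also have "\<dots> = (\<Prod>l\<in>{..<n} - S. 1 - p) * (\<Prod>l\<in>S. p)"
    by (intro arg_cong2[where f = "(*)"] prod.cong) (auto simp: S_def)
  also have "\<dots> = p ^ card S * (1 - p) ^ (n - card S)"
    using S by (simp add: card_Diff_subset finite_subset mult.commute)
  finally show ?thesis by (simp only: k_def S_def)
qed

lemma sum_strings_prod_bernoulli:
  "(\<Sum>i\<in>strings n. \<Prod>l<n. if i ! l = a then 1 - p else p) = (1::real)"
proof -
  have UNIV_eq: "(UNIV :: bool set) = {a, \<not> a}" by auto
  have "(\<Sum>i\<in>strings n. \<Prod>l<n. if i ! l = a then 1 - p else p)
      = (\<Prod>l<n. \<Sum>b\<in>UNIV. if b = a then 1 - p else p)"
    by (rule sum_strings_prod)
  also have "\<dots> = 1" unfolding UNIV_eq by simp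
  finally show ?thesis .
qed

lemma prod_bernoulli_ge:
  fixes p :: real
  assumes p: "0 < p" "p \<le> 1/2" and i: "i \<in> strings n" and weight: "hamming_weight_rel a i \<le> p"
  shows "2 powr (- (real n * Hbar p)) \<le> (\<Prod>l<n. if i ! l = a then 1 - p else p)"
proof -
  define k where "k = card {l. l < n \<and> i ! l \<noteq> a}"
  have len: "length i = n" using i by (simp add: strings_def)
  have "k \<le> card {..<n}" unfolding k_def by (rule card_mono) auto
  hence kn: "k \<le> n" by simp
  have kp: "real k \<le> p * real n"
    using weight len kn by (cases "n = 0") (auto simp: hamming_weight_rel_def k_def field_simps)
  have log_le: "log 2 p \<le> log 2 (1 - p)" using p by simp
  have "- (real n * Hbar p) = real n * p * log 2 p + real n * (1 - p) * log 2 (1 - p)"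
    using p by (simp add: Hbar_def algebra_simps)
  also have "\<dots> \<le> real k * log 2 p + (real n - real k) * log 2 (1 - p)"
    using mult_right_mono[OF kp, of "log 2 (1 - p) - log 2 p"] log_le by (simp add: algebra_simps)
  also have "\<dots> = log 2 (p ^ k * (1 - p) ^ (n - k))"
    using p kn by (simp add: log_mult log_nat_power of_nat_diff)
  finally have "2 powr (- (real n * Hbar p)) \<le> p ^ k * (1 - p) ^ (n - k)"
    using p by (subst (asm) le_log_iff) auto
  thus ?thesis by (simp add: prod_bernoulli_eq k_def)
qed

lemma card_hamming_ball_le:
  fixes p :: real
  assumes "0 < p"
  shows "real (card {i \<in> strings n. hamming_weight_rel a i \<le> p}) \<le> 2 powr (real n * Hbar p)"
proof (cases "p \<le> 1/2")
  case True
  define ball where "ball = {i \<in> strings n. hamming_weight_rel a i \<le> p}"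
  define q where "q i = (\<Prod>l<n. if i ! l = a then 1 - p else p)" for i
  have "real (card ball) * 2 powr (- (real n * Hbar p)) = (\<Sum>i\<in>ball. 2 powr (- (real n * Hbar p)))"
    by simp
  also have "\<dots> \<le> (\<Sum>i\<in>ball. q i)"
    using prod_bernoulli_ge[OF assms True] by (intro sum_mono) (auto simp: ball_def q_def)
  also have "\<dots> \<le> (\<Sum>i\<in>strings n. q i)"
    using assms True by (intro sum_mono2) (auto simp: ball_def q_def intro!: prod_nonneg)
  also have "\<dots> = 1" unfolding q_def by (rule sum_strings_prod_bernoulli)
  finally show ?thesis by (simp add: ball_def powr_minus field_simps)
next
  case False
  have "card {i \<in> strings n. hamming_weight_rel a i \<le> p} \<le> card (strings n)"
    by (intro card_mono) auto
  thus ?thesis using False by (simp add: Hbar_def card_strings powr_realpow)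
qed

theorem mainTheorem2:
  fixes mu nu :: "bool \<Rightarrow> qubit"
    and n :: nat and a :: bool and w \<delta> :: real
    and J :: "bool list set"
    and alpha :: "bool list \<Rightarrow> complex"
    and C :: "bool list \<Rightarrow> 'c::finite \<Rightarrow> complex"
  assumes "orthonormal_basis2 mu" and "orthonormal_basis2 nu"
    and "0 \<le> w" and "w \<le> 1" and "\<delta> > 0"
    and "J \<subseteq> {i\<in>strings n. hamming_weight_rel a i \<le> w + \<delta>}"
    and "\<And>i. i \<in> J \<Longrightarrow> (\<Sum>k\<in>UNIV. (cmod (C i k))\<^sup>2) = 1"
    and "(\<Sum>x\<in>strings n. \<Sum>k\<in>UNIV. (cmod (phi_state mu J alpha C x k))\<^sup>2) = 1"
  shows "Hmin_meas n nu (ptrace_C (phi_state mu J alpha C))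
           \<ge> - real n * log 2 (overlap_c mu nu) - real n * Hbar (w + \<delta>)"
proof -
  let ?sigma = "ptrace_C (phi_state mu J alpha C)"
  define c where "c = overlap_c mu nu"
  define B where "B = real (card J) * c ^ n"
  have J: "J \<subseteq> strings n" using assms(6) by auto
  have alpha: "(\<Sum>i\<in>J. (cmod (alpha i))\<^sup>2) = 1"
    using norm_phi_state[OF assms(1) J assms(7)] assms(8) by simp
  have le: "Re (expval n ?sigma (prodvec nu j)) \<le> B" if "j \<in> strings n" for j
    unfolding B_def c_def by (rule expval_ptrace_phi_state_le[OF assms(1) J that assms(7) alpha])
  have total: "(\<Sum>j\<in>strings n. Re (expval n ?sigma (prodvec nu j))) = 1"
    unfolding sum_expval_ptrace_prodvec[OF assms(2)] by (rule assms(8))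
  have "0 < B" and Hmin: "- log 2 B \<le> Hmin_meas n nu ?sigma"
    using neg_log_le_Hmin_meas[OF le total] by auto
  hence pos: "0 < card J" "0 < c ^ n"
    using overlap_c_nonneg[of mu nu] by (auto simp: B_def c_def zero_less_mult_iff)
  have "real (card J) \<le> real (card {i \<in> strings n. hamming_weight_rel a i \<le> w + \<delta>})"
    using assms(6) by (intro of_nat_mono card_mono) auto
  also have "\<dots> \<le> 2 powr (real n * Hbar (w + \<delta>))"
    using assms(3,5) by (intro card_hamming_ball_le) simp
  finally have "log 2 (card J) \<le> log 2 (2 powr (real n * Hbar (w + \<delta>)))"
    using pos by (intro log_mono) auto
  moreover have "log 2 B = log 2 (card J) + real n * log 2 c"
    using pos overlap_c_nonneg[of mu nu]
    by (simp only: B_def c_def log_mult_pos of_nat_0_less_iff log_nat_power)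
  ultimately show ?thesis using Hmin by (simp add: c_def)
qed

end
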